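(* Let $\Phi:\{1,\dots,B\}\to\mathcal{A}=\{1,\dots,A\}$, let $\Delta(\varepsilon)$ be a $B\times B$ stochastic matrix family normally parameterized by $\varepsilon\ge0$, and let $Z=\Phi(Y)$ with $Y$ the stationary Markov chain with transition matrix $\Delta(\varepsilon)$. Let $z_{-m}^0\in\mathcal{A}^{m+1}$, $\hat z_{-\hat m}^0\in\mathcal{A}^{\hat m+1}$, and Markov states $y_{-m-1},\hat y_{-\hat m-1}\in\{1,\dots,B\}$, let $n\le m,\hat m$ with $z_{-n}^0=\hat z_{-n}^0$, and let $k\ge0$ be such that $$\mathrm{ord}(p(z_{-n}^{-1}\mid z_{-m}^{-n-1})),\ \mathrm{ord}(p(\hat z_{-n}^{-1}\mid \hat z_{-\hat m}^{-n-1})),\ \mathrm{ord}(p(z_{-n}^{-1}\mid z_{-m}^{-n-1}y_{-m-1})),\ \mathrm{ord}(p(\hat z_{-n}^{-1}\mid \hat z_{-\hat m}^{-n-1}\hat y_{-\hat m-1}))\le k.$$ Then for all $j$ with $0\le j\le n-4k-1$, $$b_j(z_{-m}^0y_{-m-1})=b_j(\hat z_{-\hat m}^0\hat y_{-\hat m-1})=b_j(z_{-m}^0)=b_j(\hat z_{-\hat m}^0).$$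
   Context: For $a\in\mathcal{A}$, $\Delta_a$ is the matrix with $\Delta_a(i,j)=\Delta(i,j)$ if $\Phi(j)=a$ and $0$ otherwise. $\Delta(\varepsilon)$ is normally parameterized if (i) its entries are analytic at $\varepsilon=0$, (ii) for $\varepsilon>0$ it is non-negative and irreducible, (iii) each $\Delta_a(0)$ is zero or has rank one. $p(z_{-n}^{-1}\mid z_{-m}^{-n-1}y_{-m-1})$ means $P(Z_{-n}^{-1}=z_{-n}^{-1}\mid Z_{-m}^{-n-1}=z_{-m}^{-n-1},Y_{-m-1}=y_{-m-1})$, etc. $b_j(z_{-m}^0)$ is the coefficient of $\varepsilon^j$ in the Taylor expansion at $\varepsilon=0$ of $p(z_0\mid z_{-m}^{-1})$, and $b_j(z_{-m}^0y_{-m-1})$ is the coefficient of $\varepsilon^j$ in the Taylor expansion of $p(z_0\mid z_{-m}^{-1}y_{-m-1})=P(Z_0=z_0\mid Z_{-m}^{-1}=z_{-m}^{-1},Y_{-m-1}=y_{-m-1})$. For $f$ analytic at $0$, $\mathrm{ord}(f)$ is the degree of the first nonzero term of its Taylor series. *)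

theory Defs
  imports "HOL-Analysis.Analysis" "HOL-Library.Extended_Nat"
begin

text \<open>States of the Markov chain: a finite type 'b (standing for {1..B});
  alphabet: a finite type 'a (standing for {1..A}).
  Matrices are real^'b^'b, entry (i,j) is M $ i $ j.\<close>

fun mpow :: "real^'b^'b \<Rightarrow> nat \<Rightarrow> real^'b^'b" where
  "mpow M 0 = mat 1"
| "mpow M (Suc n) = M ** mpow M n"

definition nonneg_matrix :: "real^'b^'b \<Rightarrow> bool" where
  "nonneg_matrix M \<longleftrightarrow> (\<forall>i j. M $ i $ j \<ge> 0)"

definition stochastic_matrix :: "real^'b^'b \<Rightarrow> bool" where
  "stochastic_matrix M \<longleftrightarrow> nonneg_matrix M \<and> (\<forall>i. (\<Sum>j\<in>UNIV. M $ i $ j) = 1)"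

definition irreducible_matrix :: "real^'b^'b \<Rightarrow> bool" where
  "irreducible_matrix M \<longleftrightarrow> (\<forall>i j. \<exists>n. mpow M n $ i $ j > 0)"

text \<open>Real analyticity at 0 (on the right half-neighbourhood [0,r), which for power
  series is equivalent to a two-sided neighbourhood).\<close>
definition analytic_at0 :: "(real \<Rightarrow> real) \<Rightarrow> bool" where
  "analytic_at0 f \<longleftrightarrow> (\<exists>r>0. \<exists>c. \<forall>x. 0 \<le> x \<and> x < r \<longrightarrow> (\<lambda>n. c n * x ^ n) sums f x)"

definition Delta_sub :: "('b \<Rightarrow> 'a) \<Rightarrow> real^'b^'b \<Rightarrow> 'a \<Rightarrow> real^'b^'b" where
  "Delta_sub Phi M a = (\<chi> i j. if Phi j = a then M $ i $ j else 0)"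

definition normally_parameterized :: "('b \<Rightarrow> 'a) \<Rightarrow> (real \<Rightarrow> real^'b^'b) \<Rightarrow> bool" where
  "normally_parameterized Phi Delta \<longleftrightarrow>
     (\<forall>i j. analytic_at0 (\<lambda>e. Delta e $ i $ j)) \<and>
     (\<forall>e>0. nonneg_matrix (Delta e) \<and> irreducible_matrix (Delta e)) \<and>
     (\<forall>a. Delta_sub Phi (Delta 0) a = 0 \<or> rank (Delta_sub Phi (Delta 0) a) = 1)"

definition stationary_dist :: "real^'b^'b \<Rightarrow> real^'b \<Rightarrow> bool" where
  "stationary_dist M p \<longleftrightarrow> (\<forall>i. p $ i \<ge> 0) \<and> (\<Sum>i\<in>UNIV. p $ i) = 1 \<and>
     (\<forall>j. (\<Sum>i\<in>UNIV. p $ i * M $ i $ j) = p $ j)"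

fun path_weight :: "real^'b^'b \<Rightarrow> 'b \<Rightarrow> 'b list \<Rightarrow> real" where
  "path_weight M y [] = 1"
| "path_weight M y (x # xs) = M $ y $ x * path_weight M x xs"

text \<open>P(Y_{-l+1}^0 = ys) for the stationary chain (ys in time order).\<close>
definition prob_Y :: "real^'b \<Rightarrow> real^'b^'b \<Rightarrow> 'b list \<Rightarrow> real" where
  "prob_Y p M ys = (case ys of [] \<Rightarrow> 1 | y # rest \<Rightarrow> p $ y * path_weight M y rest)"

text \<open>P(Z_{-l+1}^0 = zs), Z = Phi(Y).\<close>
definition prob_Z :: "('b \<Rightarrow> 'a) \<Rightarrow> real^'b \<Rightarrow> real^'b^'b \<Rightarrow> 'a list \<Rightarrow> real" where
  "prob_Z Phi p M zs = (\<Sum>ys\<in>{ys. map Phi ys = zs}. prob_Y p M ys)"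

text \<open>P(Y_{-l} = y, Z_{-l+1}^0 = zs).\<close>
definition prob_YZ :: "('b \<Rightarrow> 'a) \<Rightarrow> real^'b \<Rightarrow> real^'b^'b \<Rightarrow> 'b \<Rightarrow> 'a list \<Rightarrow> real" where
  "prob_YZ Phi p M y zs = (\<Sum>ys\<in>{ys. map Phi ys = zs}. prob_Y p M (y # ys))"

definition taylor_coeffs :: "(real \<Rightarrow> real) \<Rightarrow> nat \<Rightarrow> real" where
  "taylor_coeffs f = (THE c. \<exists>r>0. \<forall>x. 0 < x \<and> x < r \<longrightarrow> (\<lambda>n. c n * x ^ n) sums f x)"

definition ord0 :: "(real \<Rightarrow> real) \<Rightarrow> enat" where
  "ord0 f = (if \<exists>n. taylor_coeffs f n \<noteq> 0
             then enat (LEAST n. taylor_coeffs f n \<noteq> 0) else \<infinity>)"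

end

theory Submission
  imports Defs
begin

text \<open>All quantities are power series in \<epsilon> at 0: the transition probabilities by assumption, the
  stationary distribution by Cramer's rule, and hence the forward vectors x \<Delta>_a1 \<cdots> \<Delta>_al
  and their masses, which are the path probabilities. The rank-one condition on \<Delta>_a(0) makes
  every 2\<times>2 minor of \<Delta>_a vanish at \<epsilon> = 0, so by Cauchy-Binet each step multiplies the cross
  products X_i Y_j - X_j Y_i of two forward vectors by one more power of \<epsilon>. After the common
  window of length n, the difference of the conditional probabilities of the next symbol, times
  the two window probabilities, is therefore a combination of cross products of high order; by
  nonnegativity no coordinate of a forward vector has lower order than its mass. Since the window
  probabilities exceed the starting masses by order at most k, the two conditional probabilities
  agree to order n - 2k, which is more than the claimed n - 4k - 1.\<close>

no_notation fps_nth (infixl \<open>$\<close> 75)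

section \<open>Power series expansions at 0 from the right\<close>

text \<open>Only values for \<epsilon> > 0 are constrained, as for taylor_coeffs: the conditional probabilities
  need not be defined at \<epsilon> = 0.\<close>
definition has_fps_expansion_right :: "(real \<Rightarrow> real) \<Rightarrow> real fps \<Rightarrow> bool"
    (infixl \<open>has'_fps'_expansion'_right\<close> 50) where
  "f has_fps_expansion_right F \<longleftrightarrow>
     fps_conv_radius F > 0 \<and> (\<forall>\<^sub>F x in at_right 0. eval_fps F x = f x)"

lemma eventually_at_right_within_fps_conv_radius:
  assumes "fps_conv_radius F > (0::ereal)"
  shows "\<forall>\<^sub>F x::real in at_right 0. ereal (norm x) < fps_conv_radius F"
proof -
  obtain r :: real where "0 < ereal r" "ereal r < fps_conv_radius F"
    using ereal_dense2[OF assms] by blast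
  then show ?thesis
    unfolding eventually_at_right_field by (intro exI[of _ r]) (auto intro: less_trans[of _ "ereal r"])
qed

lemma has_fps_expansion_rightD:
  assumes "f has_fps_expansion_right F"
  shows "\<forall>\<^sub>F x in at_right 0. ereal (norm x) < fps_conv_radius F \<and> eval_fps F x = f x \<and> x > 0"
proof -
  have "fps_conv_radius F > 0" "\<forall>\<^sub>F x in at_right 0. eval_fps F x = f x"
    using assms unfolding has_fps_expansion_right_def by auto
  from eventually_at_right_within_fps_conv_radius[OF this(1)] this(2) eventually_at_right_less[of 0]
  show ?thesis by eventually_elim auto
qed

lemma has_fps_expansion_right_cong:
  assumes "f has_fps_expansion_right F" "\<forall>\<^sub>F x in at_right 0. f x = g x"
  shows "g has_fps_expansion_right F"
proof -
  have "\<forall>\<^sub>F x in at_right 0. eval_fps F x = g x"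
    using has_fps_expansion_rightD[OF assms(1)] assms(2) by eventually_elim auto
  then show ?thesis using assms(1) unfolding has_fps_expansion_right_def by auto
qed

lemma has_fps_expansion_right_const: "(\<lambda>_. c) has_fps_expansion_right fps_const c"
  unfolding has_fps_expansion_right_def by simp

lemma has_fps_expansion_right_zero: "(\<lambda>_. 0) has_fps_expansion_right 0"
  using has_fps_expansion_right_const[of 0] by simp

lemma has_fps_expansion_right_one: "(\<lambda>_. 1) has_fps_expansion_right 1"
  using has_fps_expansion_right_const[of 1] by simp

lemma has_fps_expansion_right_fps_X_power: "(\<lambda>x. x ^ n) has_fps_expansion_right fps_X ^ n"
  unfolding has_fps_expansion_right_def by simp

lemma has_fps_expansion_right_binop:
  assumes f: "f has_fps_expansion_right F" and g: "g has_fps_expansion_right G"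
    and radius: "min (fps_conv_radius F) (fps_conv_radius G) \<le> fps_conv_radius H"
    and eval: "\<And>x. ereal (norm x) < fps_conv_radius F \<Longrightarrow> ereal (norm x) < fps_conv_radius G \<Longrightarrow>
                 eval_fps H x = h (eval_fps F x) (eval_fps G x)"
  shows "(\<lambda>x. h (f x) (g x)) has_fps_expansion_right H"
proof -
  have "0 < fps_conv_radius H"
    using f g by (intro less_le_trans[OF _ radius]) (simp add: has_fps_expansion_right_def)
  moreover have "\<forall>\<^sub>F x in at_right 0. eval_fps H x = h (f x) (g x)"
    using has_fps_expansion_rightD[OF f] has_fps_expansion_rightD[OF g]
    by eventually_elim (auto simp: eval)
  ultimately show ?thesis unfolding has_fps_expansion_right_def by auto
qed

lemma has_fps_expansion_right_add:
  "f has_fps_expansion_right F \<Longrightarrow> g has_fps_expansion_right G \<Longrightarrow>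
   (\<lambda>x. f x + g x) has_fps_expansion_right F + G"
  by (rule has_fps_expansion_right_binop) (auto simp: fps_conv_radius_add eval_fps_add)

lemma has_fps_expansion_right_diff:
  "f has_fps_expansion_right F \<Longrightarrow> g has_fps_expansion_right G \<Longrightarrow>
   (\<lambda>x. f x - g x) has_fps_expansion_right F - G"
  by (rule has_fps_expansion_right_binop) (auto simp: fps_conv_radius_diff eval_fps_diff)

lemma has_fps_expansion_right_mult:
  "f has_fps_expansion_right F \<Longrightarrow> g has_fps_expansion_right G \<Longrightarrow>
   (\<lambda>x. f x * g x) has_fps_expansion_right F * G"
  by (rule has_fps_expansion_right_binop) (auto simp: fps_conv_radius_mult eval_fps_mult)

lemma has_fps_expansion_right_sum:
  "(\<And>i. i \<in> A \<Longrightarrow> f i has_fps_expansion_right F i) \<Longrightarrow>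
   (\<lambda>x. \<Sum>i\<in>A. f i x) has_fps_expansion_right (\<Sum>i\<in>A. F i)"
proof (induction A rule: infinite_finite_induct)
  case (insert a A)
  then show ?case using has_fps_expansion_right_add[of "f a" "F a"] by simp
qed (use has_fps_expansion_right_zero in simp_all)

lemma has_fps_expansion_right_prod:
  "(\<And>i. i \<in> A \<Longrightarrow> f i has_fps_expansion_right F i) \<Longrightarrow>
   (\<lambda>x. \<Prod>i\<in>A. f i x) has_fps_expansion_right (\<Prod>i\<in>A. F i)"
proof (induction A rule: infinite_finite_induct)
  case (insert a A)
  then show ?case using has_fps_expansion_right_mult[of "f a" "F a"] by simp
qed (use has_fps_expansion_right_one in simp_all)

lemma has_fps_expansion_right_inverse:
  assumes "f has_fps_expansion_right F" "fps_nth F 0 \<noteq> 0"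
  shows "(\<lambda>x. inverse (f x)) has_fps_expansion_right inverse F"
proof -
  have r: "fps_conv_radius (inverse F) > 0"
    using assms unfolding has_fps_expansion_right_def by (intro fps_conv_radius_inverse_pos) auto
  have "\<forall>\<^sub>F x in at_right 0. eval_fps (inverse F) x = inverse (f x)"
    using has_fps_expansion_rightD[OF assms(1)] eventually_at_right_within_fps_conv_radius[OF r]
  proof eventually_elim
    case (elim x)
    then have "eval_fps (inverse F * F) x = eval_fps (inverse F) x * f x"
      by (subst eval_fps_mult) auto
    also have "eval_fps (inverse F * F) x = 1"
      using assms by (simp add: inverse_mult_eq_1)
    finally show ?case by (auto simp: field_split_simps)
  qed
  with r show ?thesis unfolding has_fps_expansion_right_def by auto
qed

lemma has_fps_expansion_right_Abs_fps:
  assumes "r > 0" "\<And>x. 0 < x \<Longrightarrow> x < r \<Longrightarrow> (\<lambda>n. c n * x ^ n) sums f x"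
  shows "f has_fps_expansion_right Abs_fps c"
proof -
  have "(\<lambda>n. c n * (r/2) ^ n) sums f (r/2)" using assms by simp
  then have "summable (\<lambda>n. c n * (r/2) ^ n)" by (rule sums_summable)
  then have "norm (r/2) \<le> conv_radius c" by (rule conv_radius_geI)
  then have "fps_conv_radius (Abs_fps c) > 0"
    unfolding fps_conv_radius_def using assms(1) by (auto intro: less_le_trans[rotated])
  moreover have "\<forall>\<^sub>F x in at_right 0. eval_fps (Abs_fps c) x = f x"
    unfolding eventually_at_right_field eval_fps_def
    using assms by (intro exI[of _ r]) (auto simp: sums_iff)
  ultimately show ?thesis unfolding has_fps_expansion_right_def by auto
qed

lemma has_fps_expansion_right_divide_power:
  assumes "f has_fps_expansion_right F" "\<forall>l<d. fps_nth F l = 0"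
  shows "(\<lambda>x. f x / x ^ d) has_fps_expansion_right fps_shift d F"
proof -
  have F: "F = fps_X ^ d * fps_shift d F"
    using assms(2) by (intro fps_ext) (auto simp: fps_X_power_mult_nth)
  have "\<forall>\<^sub>F x in at_right 0. eval_fps (fps_shift d F) x = f x / x ^ d"
    using has_fps_expansion_rightD[OF assms(1)]
  proof eventually_elim
    case (elim x)
    have "f x = eval_fps (fps_X ^ d * fps_shift d F) x" using F elim by simp
    also have "\<dots> = x ^ d * eval_fps (fps_shift d F) x"
      using elim by (subst eval_fps_mult) auto
    finally show ?case using elim by (auto simp: field_simps)
  qed
  then show ?thesis using assms(1) unfolding has_fps_expansion_right_def by auto
qed

lemma has_fps_expansion_right_tendsto:
  assumes "f has_fps_expansion_right F"
  shows "(f \<longlongrightarrow> fps_nth F 0) (at_right 0)"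
proof -
  have "norm (0::real) < fps_conv_radius F"
    using assms by (simp add: has_fps_expansion_right_def zero_ereal_def)
  then have "(eval_fps F \<longlongrightarrow> eval_fps F 0) (at_right 0)"
    using continuous_eval_fps continuous_within by blast
  moreover have "\<forall>\<^sub>F x in at_right 0. eval_fps F x = f x"
    using assms by (simp add: has_fps_expansion_right_def)
  ultimately show ?thesis by (simp add: eval_fps_at_0 tendsto_cong)
qed

lemma has_fps_expansion_right_tendsto_power:
  assumes "f has_fps_expansion_right F" "\<forall>l<d. fps_nth F l = 0"
  shows "((\<lambda>x. f x / x ^ d) \<longlongrightarrow> fps_nth F d) (at_right 0)"
  using has_fps_expansion_right_tendsto[OF has_fps_expansion_right_divide_power[OF assms]] by simp

lemma has_fps_expansion_right_tendsto_subdegree: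
  assumes "f has_fps_expansion_right F"
  shows "((\<lambda>x. f x / x ^ subdegree F) \<longlongrightarrow> fps_nth F (subdegree F)) (at_right 0)"
  using assms nth_less_subdegree_zero by (blast intro: has_fps_expansion_right_tendsto_power)

lemma has_fps_expansion_right_eventually_zero:
  assumes "f has_fps_expansion_right F" "\<forall>\<^sub>F x in at_right 0. f x = 0"
  shows "F = 0"
proof (rule ccontr)
  assume "F \<noteq> 0"
  have "\<forall>\<^sub>F x in at_right 0. f x / x ^ subdegree F = 0" using assms(2) by eventually_elim simp
  then have "((\<lambda>x. f x / x ^ subdegree F) \<longlongrightarrow> 0) (at_right 0)" by (simp add: tendsto_eventually)
  from tendsto_unique[OF trivial_limit_at_right_real
      has_fps_expansion_right_tendsto_subdegree[OF assms(1)] this]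
  have "fps_nth F (subdegree F) = 0" .
  with \<open>F \<noteq> 0\<close> show False by simp
qed

lemma has_fps_expansion_right_nonneg_lead:
  assumes "f has_fps_expansion_right F" "F \<noteq> 0" "\<forall>\<^sub>F x in at_right 0. f x \<ge> 0"
  shows "fps_nth F (subdegree F) > 0"
proof -
  have "\<forall>\<^sub>F x in at_right 0. f x / x ^ subdegree F \<ge> 0"
    using assms(3) eventually_at_right_less[of 0] by eventually_elim simp
  then have "fps_nth F (subdegree F) \<ge> 0"
    using tendsto_lowerbound[OF has_fps_expansion_right_tendsto_subdegree[OF assms(1)]] by simp
  moreover have "fps_nth F (subdegree F) \<noteq> 0" using assms(2) by simp
  ultimately show ?thesis by linarith
qed

lemma taylor_coeffs_eq:
  assumes "f has_fps_expansion_right F"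
  shows "taylor_coeffs f = fps_nth F"
  unfolding taylor_coeffs_def
proof (rule the_equality)
  obtain r where r: "r > 0"
    and "\<forall>x. 0 < x \<and> x < r \<longrightarrow> ereal (norm x) < fps_conv_radius F \<and> eval_fps F x = f x"
    using has_fps_expansion_rightD[OF assms] unfolding eventually_at_right_field by auto
  then show "\<exists>r>0. \<forall>x. 0 < x \<and> x < r \<longrightarrow> (\<lambda>n. fps_nth F n * x ^ n) sums f x"
    using sums_eval_fps by (metis norm_of_real)
next
  fix c
  assume "\<exists>r>0. \<forall>x. 0 < x \<and> x < r \<longrightarrow> (\<lambda>n. c n * x ^ n) sums f x"
  then have "f has_fps_expansion_right Abs_fps c"
    using has_fps_expansion_right_Abs_fps by blast
  then have "(\<lambda>x. f x - f x) has_fps_expansion_right F - Abs_fps c"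
    using assms has_fps_expansion_right_diff by blast
  then have "F - Abs_fps c = 0" by (rule has_fps_expansion_right_eventually_zero) simp
  then show "c = fps_nth F" by (auto simp: fun_eq_iff)
qed

lemma ord0_eq:
  assumes "f has_fps_expansion_right F"
  shows "ord0 f = (if F = 0 then \<infinity> else enat (subdegree F))"
  using fps_nonzero_nth[of F] by (auto simp: ord0_def taylor_coeffs_eq[OF assms] subdegree_def)

lemma taylor_coeffs_cong:
  assumes "\<And>x. x > 0 \<Longrightarrow> f x = g x"
  shows "taylor_coeffs f = taylor_coeffs g"
proof -
  have "(\<forall>x. 0 < x \<and> x < r \<longrightarrow> (\<lambda>n. c n * x ^ n) sums f x) \<longleftrightarrow>
        (\<forall>x. 0 < x \<and> x < r \<longrightarrow> (\<lambda>n. c n * x ^ n) sums g x)" for c r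
    using assms by auto
  then show ?thesis unfolding taylor_coeffs_def by presburger
qed

lemma ord0_cong: "(\<And>x. x > 0 \<Longrightarrow> f x = g x) \<Longrightarrow> ord0 f = ord0 g"
  unfolding ord0_def using taylor_coeffs_cong by metis

lemma has_fps_expansion_right_eventually_nonzero:
  assumes "f has_fps_expansion_right F" "\<And>x. x > 0 \<Longrightarrow> f x \<noteq> 0"
  shows "F \<noteq> 0"
proof
  assume "F = 0"
  have "\<forall>\<^sub>F x in at_right 0. f x = 0 \<and> x > 0"
    using has_fps_expansion_rightD[OF assms(1)] by eventually_elim (simp add: \<open>F = 0\<close>)
  then have "\<forall>\<^sub>F x in at_right (0::real). False" by (rule eventually_mono) (use assms(2) in auto)
  then show False by simp
qed

lemma subdegree_le_if_dominated:
  assumes f: "f has_fps_expansion_right F" and g: "g has_fps_expansion_right G" and "F \<noteq> 0"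
    and bound: "\<forall>\<^sub>F x in at_right 0. \<bar>f x\<bar> \<le> C * \<bar>g x\<bar>"
  shows "subdegree G \<le> subdegree F"
proof (rule ccontr)
  define d where "d = subdegree F"
  assume "\<not> subdegree G \<le> subdegree F"
  then have G_low: "fps_nth G l = 0" if "l \<le> d" for l
    using that by (intro nth_less_subdegree_zero) (simp add: d_def)
  have lim_f: "((\<lambda>x. \<bar>f x / x ^ d\<bar>) \<longlongrightarrow> \<bar>fps_nth F d\<bar>) (at_right 0)"
    unfolding d_def by (intro tendsto_rabs has_fps_expansion_right_tendsto_subdegree f)
  have lim_g: "((\<lambda>x. C * \<bar>g x / x ^ d\<bar>) \<longlongrightarrow> C * \<bar>fps_nth G d\<bar>) (at_right 0)"
    using G_low by (intro tendsto_mult tendsto_const tendsto_rabs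
        has_fps_expansion_right_tendsto_power[OF g]) auto
  have "\<forall>\<^sub>F x in at_right 0. \<bar>f x / x ^ d\<bar> \<le> C * \<bar>g x / x ^ d\<bar>"
    using bound eventually_at_right_less[of 0]
    by eventually_elim (simp add: abs_divide divide_right_mono)
  from tendsto_le[OF trivial_limit_at_right_real lim_g lim_f this]
  have "\<bar>fps_nth F d\<bar> \<le> C * \<bar>fps_nth G d\<bar>" .
  with G_low[of d] \<open>F \<noteq> 0\<close> show False by (simp add: d_def)
qed

lemma has_fps_expansion_right_divide:
  assumes f: "f has_fps_expansion_right F" and g: "g has_fps_expansion_right G" and "G \<noteq> 0"
    and bound: "\<forall>\<^sub>F x in at_right 0. \<bar>f x\<bar> \<le> C * \<bar>g x\<bar>"
  obtains B where "(\<lambda>x. f x / g x) has_fps_expansion_right B" and "B * G = F"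
proof (cases "F = 0")
  case True
  have "\<forall>\<^sub>F x in at_right 0. 0 = f x / g x"
    using has_fps_expansion_rightD[OF f] by eventually_elim (simp add: True)
  then have "(\<lambda>x. f x / g x) has_fps_expansion_right 0"
    using has_fps_expansion_right_cong[OF has_fps_expansion_right_zero] by simp
  with True that show ?thesis by simp
next
  case False
  define dF dG where "dF = subdegree F" and "dG = subdegree G"
  have "dG \<le> dF" unfolding dF_def dG_def using subdegree_le_if_dominated[OF f g False bound] .
  define P Q where "P = fps_shift dF F" and "Q = fps_shift dG G"
  have Q0: "fps_nth Q 0 \<noteq> 0" unfolding Q_def dG_def using \<open>G \<noteq> 0\<close> by simp
  define B where "B = fps_X ^ (dF - dG) * P * inverse Q"
  have "(\<lambda>x. x ^ (dF - dG) * (f x / x ^ dF) * inverse (g x / x ^ dG)) has_fps_expansion_right B"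
    unfolding B_def P_def Q_def dF_def dG_def
    by (intro has_fps_expansion_right_mult has_fps_expansion_right_fps_X_power
        has_fps_expansion_right_inverse has_fps_expansion_right_divide_power f g
        Q0[unfolded Q_def dG_def]) (auto intro: nth_less_subdegree_zero)
  moreover have "\<forall>\<^sub>F x in at_right 0.
      x ^ (dF - dG) * (f x / x ^ dF) * inverse (g x / x ^ dG) = f x / g x"
    using eventually_at_right_less[of 0]
  proof eventually_elim
    case (elim x)
    have "x ^ dF = x ^ (dF - dG) * x ^ dG" using \<open>dG \<le> dF\<close> by (simp flip: power_add)
    then show ?case using elim by (simp add: field_simps)
  qed
  ultimately have "(\<lambda>x. f x / g x) has_fps_expansion_right B"
    by (rule has_fps_expansion_right_cong)
  moreover have "B * G = F"
  proof -
    have "B * G = fps_X ^ (dF - dG) * P * (inverse Q * Q) * fps_X ^ dG"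
      unfolding B_def Q_def dG_def using subdegree_decompose[of G] by (metis mult.assoc)
    also have "\<dots> = fps_X ^ dF * P"
      using Q0 \<open>dG \<le> dF\<close> by (simp add: inverse_mult_eq_1 inverse_mult_eq_1' ac_simps flip: power_add)
    also have "\<dots> = F" unfolding P_def dF_def using subdegree_decompose[of F] by (simp add: mult.commute)
    finally show ?thesis .
  qed
  ultimately show ?thesis by (rule that)
qed

lemma fps_X_power_dvd_iff: "fps_X ^ N dvd F \<longleftrightarrow> (\<forall>l<N. fps_nth F l = 0)"
proof
  assume "fps_X ^ N dvd F"
  then obtain H where "F = fps_X ^ N * H" by (elim dvdE)
  then show "\<forall>l<N. fps_nth F l = 0" by (simp add: fps_X_power_mult_nth)
next
  assume "\<forall>l<N. fps_nth F l = 0"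
  then have "F = fps_X ^ N * fps_shift N F" by (intro fps_ext) (auto simp: fps_X_power_mult_nth)
  then show "fps_X ^ N dvd F" by (metis dvd_triv_left)
qed

lemma fps_X_power_dvd_cancel:
  fixes F G :: "'a::field fps"
  assumes "fps_X ^ (N + subdegree G) dvd F * G" "G \<noteq> 0"
  shows "fps_X ^ N dvd F"
proof -
  define U where "U = fps_shift (subdegree G) G"
  have "is_unit U" unfolding U_def using assms(2) by (simp add: fps_is_unit_iff)
  have "fps_X ^ subdegree G * fps_X ^ N dvd fps_X ^ subdegree G * (F * U)"
    using assms(1) unfolding U_def
    by (subst (asm) (2) subdegree_decompose) (simp add: power_add ac_simps)
  then have "fps_X ^ N dvd F * U" by simp
  with \<open>is_unit U\<close> show ?thesis by (simp add: dvd_mult_unit_iff)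
qed

text \<open>No cancellation occurs in a sum of nonnegative functions, whose leading coefficients are
  positive.\<close>
lemma fps_X_power_subdegree_sum_dvd:
  assumes "finite I" "i \<in> I"
    and "\<And>i. i \<in> I \<Longrightarrow> x i has_fps_expansion_right X i"
    and "\<And>i. i \<in> I \<Longrightarrow> \<forall>\<^sub>F e in at_right 0. x i e \<ge> 0"
  shows "fps_X ^ subdegree (\<Sum>j\<in>I. X j) dvd X i"
proof (rule ccontr)
  define S where "S = (\<Sum>j\<in>I. X j)"
  define d where "d = subdegree (X i)"
  assume "\<not> fps_X ^ subdegree (\<Sum>j\<in>I. X j) dvd X i"
  then obtain l where l: "l < subdegree S" "fps_nth (X i) l \<noteq> 0"
    unfolding S_def fps_X_power_dvd_iff by blast
  then have "X i \<noteq> 0" by auto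
  have "d < subdegree S" using subdegree_leI[OF l(2)] l(1) unfolding d_def by linarith
  then have S_low: "\<forall>l\<le>d. fps_nth S l = 0" by (auto intro: nth_less_subdegree_zero)
  have lim_i: "((\<lambda>e. x i e / e ^ d) \<longlongrightarrow> fps_nth (X i) d) (at_right 0)"
    unfolding d_def by (rule has_fps_expansion_right_tendsto_subdegree) (use assms in auto)
  have lim_S: "((\<lambda>e. (\<Sum>j\<in>I. x j e) / e ^ d) \<longlongrightarrow> fps_nth S d) (at_right 0)"
    unfolding S_def using S_low[unfolded S_def] assms(3)
    by (intro has_fps_expansion_right_tendsto_power has_fps_expansion_right_sum) auto
  have "\<forall>\<^sub>F e in at_right 0. \<forall>j\<in>I. x j e \<ge> 0"
    using assms(1,4) by (simp add: eventually_ball_finite)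
  then have "\<forall>\<^sub>F e in at_right 0. x i e / e ^ d \<le> (\<Sum>j\<in>I. x j e) / e ^ d"
    using eventually_at_right_less[of 0]
  proof eventually_elim
    case (elim e)
    then have "x i e \<le> (\<Sum>j\<in>I. x j e)" using assms(1,2) by (intro member_le_sum) auto
    then show ?case using elim by (intro divide_right_mono) auto
  qed
  from tendsto_le[OF trivial_limit_at_right_real lim_S lim_i this]
  have "fps_nth (X i) d \<le> fps_nth S d" .
  moreover have "fps_nth (X i) d > 0" unfolding d_def
    using has_fps_expansion_right_nonneg_lead assms \<open>X i \<noteq> 0\<close> by blast
  ultimately show False using S_low by simp
qed

section \<open>Forward vectors and their cross products\<close>

definition forward_step ::
    "'r::comm_semiring_0^'b::finite^'b \<Rightarrow> ('b \<Rightarrow> 'a) \<Rightarrow> 'r^'b \<Rightarrow> 'a \<Rightarrow> 'r^'b" where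
  "forward_step M Phi x a = (\<chi> j. if Phi j = a then \<Sum>i\<in>UNIV. x $ i * M $ i $ j else 0)"

text \<open>The forward vector is the row vector x \<Delta>_a1 \<cdots> \<Delta>_an; its mass is the probability of
  observing a1 \<dots> an after starting from the (unnormalised) distribution x.\<close>
fun forward ::
    "'r::comm_semiring_0^'b::finite^'b \<Rightarrow> ('b \<Rightarrow> 'a) \<Rightarrow> 'r^'b \<Rightarrow> 'a list \<Rightarrow> 'r^'b" where
  "forward M Phi x [] = x"
| "forward M Phi x (a # as) = forward M Phi (forward_step M Phi x a) as"

definition mass :: "'r::comm_monoid_add^'b::finite \<Rightarrow> 'r" where
  "mass x = (\<Sum>i\<in>UNIV. x $ i)"

lemma forward_append: "forward M Phi x (as @ bs) = forward M Phi (forward M Phi x as) bs"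
  by (induction as arbitrary: x) auto

lemma mass_forward_snoc:
  "mass (forward M Phi x (as @ [a])) =
     (\<Sum>i\<in>UNIV. forward M Phi x as $ i * (\<Sum>j\<in>UNIV. if Phi j = a then M $ i $ j else 0))"
proof -
  have "mass (forward M Phi x (as @ [a]))
      = (\<Sum>j\<in>UNIV. if Phi j = a then \<Sum>i\<in>UNIV. forward M Phi x as $ i * M $ i $ j else 0)"
    by (simp add: forward_append mass_def forward_step_def)
  also have "\<dots> = (\<Sum>j\<in>UNIV. \<Sum>i\<in>UNIV. forward M Phi x as $ i * (if Phi j = a then M $ i $ j else 0))"
    by (intro sum.cong refl) auto
  also have "\<dots> = (\<Sum>i\<in>UNIV. forward M Phi x as $ i * (\<Sum>j\<in>UNIV. if Phi j = a then M $ i $ j else 0))"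
    by (subst sum.swap) (simp add: sum_distrib_left)
  finally show ?thesis .
qed

lemma forward_nonneg:
  assumes "nonneg_matrix M" "\<And>i. x $ i \<ge> 0"
  shows "forward M Phi x as $ j \<ge> 0"
  using assms(2)
proof (induction as arbitrary: x)
  case (Cons a as)
  have "forward_step M Phi x a $ i \<ge> 0" for i
    using Cons.prems assms(1) by (auto simp: forward_step_def nonneg_matrix_def intro!: sum_nonneg)
  then show ?case using Cons.IH by simp
qed simp

lemma mass_forward_step_le:
  assumes "stochastic_matrix M" "\<And>i. x $ i \<ge> 0"
  shows "mass (forward_step M Phi x a) \<le> mass x"
proof -
  have "mass (forward_step M Phi x a) \<le> (\<Sum>j\<in>UNIV. \<Sum>i\<in>UNIV. x $ i * M $ i $ j)"
    using assms unfolding mass_def forward_step_def stochastic_matrix_def nonneg_matrix_def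
    by (intro sum_mono) (auto intro!: sum_nonneg)
  also have "\<dots> = (\<Sum>i\<in>UNIV. x $ i * (\<Sum>j\<in>UNIV. M $ i $ j))"
    by (subst sum.swap) (simp add: sum_distrib_left)
  also have "\<dots> = mass x" using assms(1) by (simp add: stochastic_matrix_def mass_def)
  finally show ?thesis .
qed

lemma mass_forward_le:
  assumes "stochastic_matrix M" "\<And>i. x $ i \<ge> 0"
  shows "mass (forward M Phi x as) \<le> mass x"
  using assms(2)
proof (induction as arbitrary: x)
  case (Cons a as)
  have "nonneg_matrix M" using assms(1) by (simp add: stochastic_matrix_def)
  then have "forward_step M Phi x a $ i \<ge> 0" for i
    using forward_nonneg[of M x Phi "[a]"] Cons.prems by simp
  then have "mass (forward M Phi x (a # as)) \<le> mass (forward_step M Phi x a)"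
    by (simp add: Cons.IH)
  also have "\<dots> \<le> mass x" by (rule mass_forward_step_le[OF assms(1) Cons.prems])
  finally show ?case .
qed simp

lemma forward_expansion:
  assumes "\<And>i j. (\<lambda>e. M e $ i $ j) has_fps_expansion_right E $ i $ j"
    and "\<And>i. (\<lambda>e. x e $ i) has_fps_expansion_right X $ i"
  shows "(\<lambda>e. forward (M e) Phi (x e) as $ j) has_fps_expansion_right forward E Phi X as $ j"
  using assms(2)
proof (induction as arbitrary: x X j)
  case (Cons a as)
  have "(\<lambda>e. forward_step (M e) Phi (x e) a $ i) has_fps_expansion_right forward_step E Phi X a $ i" for i
    using Cons.prems assms(1) has_fps_expansion_right_zero
    by (cases "Phi i = a") (auto simp: forward_step_def
        intro!: has_fps_expansion_right_sum has_fps_expansion_right_mult)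
  then show ?case using Cons.IH by simp
qed simp

lemma mass_forward_expansion:
  assumes "\<And>i j. (\<lambda>e. M e $ i $ j) has_fps_expansion_right E $ i $ j"
    and "\<And>i. (\<lambda>e. x e $ i) has_fps_expansion_right X $ i"
  shows "(\<lambda>e. mass (forward (M e) Phi (x e) as)) has_fps_expansion_right mass (forward E Phi X as)"
  unfolding mass_def by (intro has_fps_expansion_right_sum forward_expansion assms)

lemma fps_X_power_subdegree_mass_dvd:
  assumes "\<And>i. (\<lambda>e. x e $ i) has_fps_expansion_right X $ i" "\<And>e i. e > 0 \<Longrightarrow> x e $ i \<ge> 0"
  shows "fps_X ^ subdegree (mass X) dvd X $ i"
  unfolding mass_def using assms eventually_at_right_less[of 0]
  by (intro fps_X_power_subdegree_sum_dvd[where x="\<lambda>i e. x e $ i"])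
     (auto elim: eventually_mono)

definition cross :: "'r::comm_ring^'b \<Rightarrow> 'r^'b \<Rightarrow> 'b \<Rightarrow> 'b \<Rightarrow> 'r" where
  "cross x y i j = x $ i * y $ j - x $ j * y $ i"

text \<open>The paper's condition rank \<Delta>_a(0) \<le> 1, stated through the 2\<times>2 minors of the constant terms
  of the columns j with \<Phi> j = a.\<close>
definition rank_one_blocks_at_0 :: "('b \<Rightarrow> 'a) \<Rightarrow> 'r::comm_ring fps^'b^'b \<Rightarrow> bool" where
  "rank_one_blocks_at_0 Phi E \<longleftrightarrow>
     (\<forall>i i' j l. Phi j = Phi l \<longrightarrow> fps_nth (E $ i $ j * E $ i' $ l - E $ i $ l * E $ i' $ j) 0 = 0)"

lemma cross_forward_step_double:
  fixes M :: "'r::comm_ring^'b::finite^'b" and x y :: "'r^'b"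
  assumes "Phi j = a" "Phi l = a"
  defines "x' \<equiv> forward_step M Phi x a" and "y' \<equiv> forward_step M Phi y a"
  shows "cross x' y' j l + cross x' y' j l
       = (\<Sum>i\<in>UNIV. \<Sum>i'\<in>UNIV. cross x y i i' * (M $ i $ j * M $ i' $ l - M $ i $ l * M $ i' $ j))"
proof -
  define K where "K i i' = M $ i $ j * M $ i' $ l - M $ i $ l * M $ i' $ j" for i i'
  define W where "W = (\<Sum>i\<in>UNIV. \<Sum>i'\<in>UNIV. x $ i * y $ i' * K i i')"
  have "cross x' y' j l = (\<Sum>i\<in>UNIV. \<Sum>i'\<in>UNIV.
           x $ i * M $ i $ j * (y $ i' * M $ i' $ l) - x $ i * M $ i $ l * (y $ i' * M $ i' $ j))"
    using assms(1,2) by (simp add: x'_def y'_def cross_def forward_step_def sum_product sum_subtractf)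
  also have "\<dots> = W" unfolding W_def K_def by (intro sum.cong refl) (simp add: algebra_simps)
  finally have x'y': "cross x' y' j l = W" .
  \<comment> \<open>K is antisymmetric, so swapping the summation indices negates W\<close>
  have "(\<Sum>i\<in>UNIV. \<Sum>i'\<in>UNIV. x $ i' * y $ i * K i i') = (\<Sum>i'\<in>UNIV. \<Sum>i\<in>UNIV. - (x $ i' * y $ i * K i' i))"
    by (subst sum.swap) (intro sum.cong refl, simp add: K_def algebra_simps)
  also have "\<dots> = - W" unfolding W_def by (simp only: sum_negf)
  finally have swap: "(\<Sum>i\<in>UNIV. \<Sum>i'\<in>UNIV. x $ i' * y $ i * K i i') = - W" .
  have "(\<Sum>i\<in>UNIV. \<Sum>i'\<in>UNIV. cross x y i i' * K i i')
      = W - (\<Sum>i\<in>UNIV. \<Sum>i'\<in>UNIV. x $ i' * y $ i * K i i')"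
    unfolding W_def cross_def by (simp add: sum_subtractf algebra_simps)
  then show ?thesis using x'y' swap by (simp add: K_def)
qed

lemma fps_X_power_dvd_cross_forward_step:
  fixes E :: "'r::field_char_0 fps^'b::finite^'b"
  assumes "rank_one_blocks_at_0 Phi E" "\<And>i i'. fps_X ^ N dvd cross X Y i i'"
  shows "fps_X ^ Suc N dvd cross (forward_step E Phi X a) (forward_step E Phi Y a) j l"
proof (cases "Phi j = a \<and> Phi l = a")
  case True
  have "fps_X dvd E $ i $ j * E $ i' $ l - E $ i $ l * E $ i' $ j" for i i'
    using assms(1) True fps_X_power_dvd_iff[of 1 "E $ i $ j * E $ i' $ l - E $ i $ l * E $ i' $ j"]
    by (simp add: rank_one_blocks_at_0_def)
  then have "fps_X ^ Suc N dvd cross X Y i i' * (E $ i $ j * E $ i' $ l - E $ i $ l * E $ i' $ j)" for i i'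
    unfolding power_Suc2 using assms(2) by (rule mult_dvd_mono[rotated])
  then have "fps_X ^ Suc N dvd cross (forward_step E Phi X a) (forward_step E Phi Y a) j l
                               + cross (forward_step E Phi X a) (forward_step E Phi Y a) j l"
    using True by (simp add: cross_forward_step_double dvd_sum del: mult_2 mult_2_right)
  then show ?thesis unfolding fps_X_power_dvd_iff fps_add_nth by simp
next
  case False
  then show ?thesis by (auto simp: cross_def forward_step_def)
qed

lemma fps_X_power_dvd_cross_forward:
  fixes E :: "'r::field_char_0 fps^'b::finite^'b"
  assumes "rank_one_blocks_at_0 Phi E" "\<And>i i'. fps_X ^ N dvd cross X Y i i'"
  shows "fps_X ^ (N + length as) dvd cross (forward E Phi X as) (forward E Phi Y as) j l"
  using assms(2)
proof (induction as arbitrary: X Y N)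
  case (Cons a as)
  have "\<And>i i'. fps_X ^ Suc N dvd cross (forward_step E Phi X a) (forward_step E Phi Y a) i i'"
    by (rule fps_X_power_dvd_cross_forward_step[OF assms(1) Cons.prems])
  from Cons.IH[OF this] show ?case by simp
qed simp

lemma cross_weighted_mass:
  fixes x y :: "'r::comm_ring^'b::finite"
  shows "(\<Sum>i\<in>UNIV. x $ i * t i) * mass y - (\<Sum>i\<in>UNIV. y $ i * t i) * mass x
       = (\<Sum>i\<in>UNIV. \<Sum>i'\<in>UNIV. t i * cross x y i i')"
proof -
  have "(\<Sum>i\<in>UNIV. x $ i * t i) * mass y - (\<Sum>i\<in>UNIV. y $ i * t i) * mass x
      = (\<Sum>i\<in>UNIV. \<Sum>i'\<in>UNIV. x $ i * t i * y $ i' - y $ i * t i * x $ i')"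
    by (simp only: mass_def sum_product sum_subtractf)
  also have "\<dots> = (\<Sum>i\<in>UNIV. \<Sum>i'\<in>UNIV. t i * cross x y i i')"
    unfolding cross_def by (intro sum.cong refl) (simp add: algebra_simps)
  finally show ?thesis .
qed

text \<open>Multiplied by both window masses, the difference of the two ratios is a combination of cross
  products, each of order at least n beyond the starting masses.\<close>
lemma fps_nth_next_symbol_ratio_eq:
  fixes E :: "'r::field_char_0 fps^'b::finite^'b"
  assumes rank_one: "rank_one_blocks_at_0 Phi E"
    and X: "\<And>i. fps_X ^ subdegree (mass X) dvd X $ i"
    and Y: "\<And>i. fps_X ^ subdegree (mass Y) dvd Y $ i"
    and X_nz: "mass (forward E Phi X as) \<noteq> 0" and Y_nz: "mass (forward E Phi Y as) \<noteq> 0"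
    and X_ord: "subdegree (mass (forward E Phi X as)) \<le> subdegree (mass X) + k"
    and Y_ord: "subdegree (mass (forward E Phi Y as)) \<le> subdegree (mass Y) + k"
    and BX: "BX * mass (forward E Phi X as) = mass (forward E Phi X (as @ [a]))"
    and BY: "BY * mass (forward E Phi Y as) = mass (forward E Phi Y (as @ [a]))"
    and "jj + 2 * k < length as"
  shows "fps_nth BX jj = fps_nth BY jj"
proof -
  define Xn Yn where "Xn = forward E Phi X as" and "Yn = forward E Phi Y as"
  define t where "t i = (\<Sum>j\<in>UNIV. if Phi j = a then E $ i $ j else 0)" for i
  have "fps_X ^ (subdegree (mass X) + subdegree (mass Y)) dvd cross X Y i i'" for i i'
    unfolding cross_def power_add by (intro dvd_diff mult_dvd_mono X Y)
  then have cross_n: "fps_X ^ (subdegree (mass X) + subdegree (mass Y) + length as) dvd cross Xn Yn i i'"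
    for i i' unfolding Xn_def Yn_def by (rule fps_X_power_dvd_cross_forward[OF rank_one])
  have "(BX - BY) * (mass Xn * mass Yn) = (BX * mass Xn) * mass Yn - (BY * mass Yn) * mass Xn"
    by (simp add: algebra_simps)
  also have "\<dots> = (\<Sum>i\<in>UNIV. Xn $ i * t i) * mass Yn - (\<Sum>i\<in>UNIV. Yn $ i * t i) * mass Xn"
    using BX BY by (simp add: Xn_def Yn_def t_def mass_forward_snoc)
  also have "\<dots> = (\<Sum>i\<in>UNIV. \<Sum>i'\<in>UNIV. t i * cross Xn Yn i i')" by (rule cross_weighted_mass)
  finally have "fps_X ^ (subdegree (mass X) + subdegree (mass Y) + length as)
                  dvd (BX - BY) * (mass Xn * mass Yn)"
    using cross_n by (simp add: dvd_sum)
  moreover have "mass Xn * mass Yn \<noteq> 0" using X_nz Y_nz by (simp add: Xn_def Yn_def)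
  moreover have "length as - 2 * k + subdegree (mass Xn * mass Yn)
                 \<le> subdegree (mass X) + subdegree (mass Y) + length as"
    using X_nz Y_nz X_ord Y_ord \<open>jj + 2 * k < length as\<close> by (simp add: Xn_def Yn_def)
  ultimately have "fps_X ^ (length as - 2 * k) dvd BX - BY"
    by (meson fps_X_power_dvd_cancel dvd_trans le_imp_power_dvd)
  then show ?thesis using \<open>jj + 2 * k < length as\<close> by (simp add: fps_X_power_dvd_iff)
qed

section \<open>Conditional probabilities of the next symbol\<close>

context
  fixes Phi :: "'b::finite \<Rightarrow> 'a" and Delta :: "real \<Rightarrow> real^'b^'b" and E :: "real fps^'b^'b"
  assumes Delta_expansion: "\<And>i j. (\<lambda>e. Delta e $ i $ j) has_fps_expansion_right E $ i $ j"
    and rank_one: "rank_one_blocks_at_0 Phi E"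
    and stochastic: "\<forall>e>0. stochastic_matrix (Delta e)"
begin

lemma mass_ratio_expansion:
  assumes x: "\<And>i. (\<lambda>e. x e $ i) has_fps_expansion_right X $ i"
    and x_nonneg: "\<And>e i. e > 0 \<Longrightarrow> x e $ i \<ge> 0"
    and "mass (forward E Phi X as) \<noteq> 0"
  obtains B where
    "(\<lambda>e. mass (forward (Delta e) Phi (x e) (as @ bs)) / mass (forward (Delta e) Phi (x e) as))
       has_fps_expansion_right B"
    and "B * mass (forward E Phi X as) = mass (forward E Phi X (as @ bs))"
proof (rule has_fps_expansion_right_divide)
  show "\<forall>\<^sub>F e in at_right 0. \<bar>mass (forward (Delta e) Phi (x e) (as @ bs))\<bar>
                             \<le> 1 * \<bar>mass (forward (Delta e) Phi (x e) as)\<bar>"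
    using eventually_at_right_less[of 0]
  proof eventually_elim
    case (elim e)
    have stochastic_e: "stochastic_matrix (Delta e)" using stochastic elim by simp
    then have "nonneg_matrix (Delta e)" by (simp add: stochastic_matrix_def)
    then have nonneg: "forward (Delta e) Phi (x e) cs $ i \<ge> 0" for cs i
      using forward_nonneg x_nonneg[OF elim] by blast
    have "mass (forward (Delta e) Phi (x e) (as @ bs)) \<le> mass (forward (Delta e) Phi (x e) as)"
      unfolding forward_append using nonneg by (rule mass_forward_le[OF stochastic_e])
    moreover have "0 \<le> mass (forward (Delta e) Phi (x e) (as @ bs))"
      using nonneg by (simp add: mass_def sum_nonneg)
    ultimately show ?case by simp
  qed
qed (use assms in \<open>auto intro: mass_forward_expansion Delta_expansion\<close>)

lemma next_symbol_expansion:
  assumes x: "\<And>i. (\<lambda>e. x e $ i) has_fps_expansion_right X $ i"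
    and x_nonneg: "\<And>e i. e > 0 \<Longrightarrow> x e $ i \<ge> 0"
    and ord: "ord0 (\<lambda>e. mass (forward (Delta e) Phi (x e) as) / mass (x e)) \<le> enat k"
  obtains B where
    "(\<lambda>e. mass (forward (Delta e) Phi (x e) (as @ [a])) / mass (forward (Delta e) Phi (x e) as))
       has_fps_expansion_right B"
    and "B * mass (forward E Phi X as) = mass (forward E Phi X (as @ [a]))"
    and "mass (forward E Phi X as) \<noteq> 0"
    and "subdegree (mass (forward E Phi X as)) \<le> subdegree (mass X) + k"
proof -
  have "mass X \<noteq> 0"
  proof
    assume "mass X = 0"
    have "(\<lambda>e. mass (x e)) has_fps_expansion_right mass X"
      using mass_forward_expansion[OF Delta_expansion x, of Phi "[]"] by simp
    then have "\<forall>\<^sub>F e in at_right 0. 0 = mass (forward (Delta e) Phi (x e) as) / mass (x e)"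
      using has_fps_expansion_rightD \<open>mass X = 0\<close> by (fastforce elim: eventually_mono)
    then have "(\<lambda>e. mass (forward (Delta e) Phi (x e) as) / mass (x e)) has_fps_expansion_right 0"
      using has_fps_expansion_right_cong[OF has_fps_expansion_right_zero] by simp
    with ord show False by (simp add: ord0_eq)
  qed
  then obtain Q where
    "(\<lambda>e. mass (forward (Delta e) Phi (x e) as) / mass (x e)) has_fps_expansion_right Q"
    and Q: "Q * mass X = mass (forward E Phi X as)"
    using mass_ratio_expansion[OF x x_nonneg, of "[]" as] by auto
  with ord have "Q \<noteq> 0" "subdegree Q \<le> k" by (auto simp: ord0_eq split: if_splits)
  with Q \<open>mass X \<noteq> 0\<close> have "mass (forward E Phi X as) \<noteq> 0"
    and "subdegree (mass (forward E Phi X as)) \<le> subdegree (mass X) + k"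
    by (auto simp flip: Q)
  with mass_ratio_expansion[OF x x_nonneg this(1), of "[a]"] that show ?thesis by blast
qed

lemma taylor_coeffs_next_symbol_eq:
  assumes x: "\<And>i. (\<lambda>e. x e $ i) has_fps_expansion_right X $ i"
    and x_nonneg: "\<And>e i. e > 0 \<Longrightarrow> x e $ i \<ge> 0"
    and y: "\<And>i. (\<lambda>e. y e $ i) has_fps_expansion_right Y $ i"
    and y_nonneg: "\<And>e i. e > 0 \<Longrightarrow> y e $ i \<ge> 0"
    and ord_x: "ord0 (\<lambda>e. mass (forward (Delta e) Phi (x e) as) / mass (x e)) \<le> enat k"
    and ord_y: "ord0 (\<lambda>e. mass (forward (Delta e) Phi (y e) as) / mass (y e)) \<le> enat k"
    and "jj + 2 * k < length as"
  shows "taylor_coeffs (\<lambda>e. mass (forward (Delta e) Phi (x e) (as @ [a]))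
                            / mass (forward (Delta e) Phi (x e) as)) jj
       = taylor_coeffs (\<lambda>e. mass (forward (Delta e) Phi (y e) (as @ [a]))
                            / mass (forward (Delta e) Phi (y e) as)) jj"
proof -
  obtain BX where BX: "(\<lambda>e. mass (forward (Delta e) Phi (x e) (as @ [a]))
                            / mass (forward (Delta e) Phi (x e) as)) has_fps_expansion_right BX"
    "BX * mass (forward E Phi X as) = mass (forward E Phi X (as @ [a]))"
    "mass (forward E Phi X as) \<noteq> 0"
    "subdegree (mass (forward E Phi X as)) \<le> subdegree (mass X) + k"
    by (rule next_symbol_expansion[OF x x_nonneg ord_x])
  obtain BY where BY: "(\<lambda>e. mass (forward (Delta e) Phi (y e) (as @ [a]))
                            / mass (forward (Delta e) Phi (y e) as)) has_fps_expansion_right BY"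
    "BY * mass (forward E Phi Y as) = mass (forward E Phi Y (as @ [a]))"
    "mass (forward E Phi Y as) \<noteq> 0"
    "subdegree (mass (forward E Phi Y as)) \<le> subdegree (mass Y) + k"
    by (rule next_symbol_expansion[OF y y_nonneg ord_y])
  have "fps_nth BX jj = fps_nth BY jj"
    by (rule fps_nth_next_symbol_ratio_eq[OF rank_one
          fps_X_power_subdegree_mass_dvd[OF x x_nonneg] fps_X_power_subdegree_mass_dvd[OF y y_nonneg]
          BX(3) BY(3) BX(4) BY(4) BX(2) BY(2) \<open>jj + 2 * k < length as\<close>])
  then show ?thesis by (simp add: taylor_coeffs_eq[OF BX(1)] taylor_coeffs_eq[OF BY(1)])
qed

lemma taylor_coeffs_conditional_eq:
  assumes Pr: "\<forall>e>0. \<forall>ws. Pr e ws = mass (forward (Delta e) Phi (s e) ws)"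
    and s: "\<And>i. (\<lambda>e. s e $ i) has_fps_expansion_right S $ i" and s_nonneg: "\<forall>e>0. \<forall>i. s e $ i \<ge> 0"
    and Pr': "\<forall>e>0. \<forall>ws. Pr' e ws = mass (forward (Delta e) Phi (s' e) ws)"
    and s': "\<And>i. (\<lambda>e. s' e $ i) has_fps_expansion_right S' $ i" and s'_nonneg: "\<forall>e>0. \<forall>i. s' e $ i \<ge> 0"
    and zs: "zs = u @ w @ [a]" "zs0 = u @ w" and zs': "zs' = u' @ w @ [a]" "zs0' = u' @ w"
    and ord: "ord0 (\<lambda>e. Pr e zs0 / Pr e u) \<le> enat k"
    and ord': "ord0 (\<lambda>e. Pr' e zs0' / Pr' e u') \<le> enat k"
    and "jj + 2 * k < length w"
  shows "taylor_coeffs (\<lambda>e. Pr e zs / Pr e zs0) jj = taylor_coeffs (\<lambda>e. Pr' e zs' / Pr' e zs0') jj"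
proof -
  define x y where "x e = forward (Delta e) Phi (s e) u" and "y e = forward (Delta e) Phi (s' e) u'"
    for e
  have x: "(\<lambda>e. x e $ i) has_fps_expansion_right forward E Phi S u $ i"
    and y: "(\<lambda>e. y e $ i) has_fps_expansion_right forward E Phi S' u' $ i" for i
    unfolding x_def y_def by (rule forward_expansion[OF Delta_expansion s(1)],
        rule forward_expansion[OF Delta_expansion s'(1)])
  have x_nonneg: "x e $ i \<ge> 0" and y_nonneg: "y e $ i \<ge> 0" if "e > 0" for e i
  proof -
    have "nonneg_matrix (Delta e)" using stochastic that by (simp add: stochastic_matrix_def)
    then show "x e $ i \<ge> 0" "y e $ i \<ge> 0"
      unfolding x_def y_def using s_nonneg s'_nonneg that by (simp_all add: forward_nonneg)
  qed
  have "ord0 (\<lambda>e. mass (forward (Delta e) Phi (x e) w) / mass (x e)) = ord0 (\<lambda>e. Pr e zs0 / Pr e u)"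
    by (rule ord0_cong) (simp add: Pr x_def zs forward_append)
  with ord have ord_x: "ord0 (\<lambda>e. mass (forward (Delta e) Phi (x e) w) / mass (x e)) \<le> enat k"
    by simp
  have "ord0 (\<lambda>e. mass (forward (Delta e) Phi (y e) w) / mass (y e)) = ord0 (\<lambda>e. Pr' e zs0' / Pr' e u')"
    by (rule ord0_cong) (simp add: Pr' y_def zs' forward_append)
  with ord' have ord_y: "ord0 (\<lambda>e. mass (forward (Delta e) Phi (y e) w) / mass (y e)) \<le> enat k"
    by simp
  have "taylor_coeffs (\<lambda>e. Pr e zs / Pr e zs0) jj
      = taylor_coeffs (\<lambda>e. mass (forward (Delta e) Phi (x e) (w @ [a]))
                            / mass (forward (Delta e) Phi (x e) w)) jj"
    by (rule arg_cong[where f="\<lambda>c. c jj"], rule taylor_coeffs_cong)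
      (simp add: Pr x_def zs forward_append)
  also have "\<dots> = taylor_coeffs (\<lambda>e. mass (forward (Delta e) Phi (y e) (w @ [a]))
                            / mass (forward (Delta e) Phi (y e) w)) jj"
    by (rule taylor_coeffs_next_symbol_eq[OF x x_nonneg y y_nonneg ord_x ord_y
          \<open>jj + 2 * k < length w\<close>])
  also have "\<dots> = taylor_coeffs (\<lambda>e. Pr' e zs' / Pr' e zs0') jj"
    by (rule arg_cong[where f="\<lambda>c. c jj"], rule taylor_coeffs_cong)
      (simp add: Pr' y_def zs' forward_append)
  finally show ?thesis .
qed

end

section \<open>The stationary distribution\<close>

lemma mpow_nonneg: "nonneg_matrix M \<Longrightarrow> mpow M n $ i $ j \<ge> 0"
  by (induction n arbitrary: i j)
    (auto simp: nonneg_matrix_def mat_def matrix_matrix_mult_def intro!: sum_nonneg)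

lemma vector_matrix_mult_mpow_fixed: "x v* M = x \<Longrightarrow> x v* mpow M n = x"
  by (induction n) (simp_all flip: vector_matrix_mul_assoc)

lemma stationary_dist_fixed: "stationary_dist M p \<Longrightarrow> p v* M = p"
  by (simp add: stationary_dist_def vector_matrix_mult_def vec_eq_iff)

lemma fixed_vector_zero_spreads:
  assumes "irreducible_matrix M" "nonneg_matrix M" "x v* M = x" "\<And>i. x $ i \<ge> 0" "x $ j = 0"
  shows "x $ i = 0"
proof -
  obtain n where n: "mpow M n $ i $ j > 0" using assms(1) by (auto simp: irreducible_matrix_def)
  have "(x v* mpow M n) $ j = 0" using vector_matrix_mult_mpow_fixed[OF assms(3)] assms(5) by simp
  then have "(\<Sum>l\<in>UNIV. x $ l * mpow M n $ l $ j) = 0" by (simp add: vector_matrix_mult_def)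
  moreover have "\<forall>l\<in>UNIV. x $ l * mpow M n $ l $ j \<ge> 0"
    using assms(4) mpow_nonneg[OF assms(2)] by simp
  ultimately have "x $ i * mpow M n $ i $ j = 0" by (simp add: sum_nonneg_eq_0_iff)
  with n show ?thesis by simp
qed

lemma stationary_dist_pos:
  assumes "irreducible_matrix M" "nonneg_matrix M" "stationary_dist M p"
  shows "p $ i > 0"
proof (rule ccontr)
  assume "\<not> p $ i > 0"
  moreover have nonneg: "p $ j \<ge> 0" for j using assms(3) by (simp add: stationary_dist_def)
  ultimately have "p $ i = 0" by (simp add: order_less_le)
  then have "p $ j = 0" for j
    by (rule fixed_vector_zero_spreads[OF assms(1,2) stationary_dist_fixed[OF assms(3)] nonneg])
  then show False using assms(3) by (simp add: stationary_dist_def)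
qed

lemma fixed_vector_mass_zero:
  assumes irr: "irreducible_matrix M" and nonneg: "nonneg_matrix M" and p: "stationary_dist M p"
    and fixed: "x v* M = x" and "mass x = 0"
  shows "x = 0"
proof -
  define c where "c = Max ((\<lambda>i. x $ i / p $ i) ` UNIV)"
  have "c \<in> range (\<lambda>i. x $ i / p $ i)" unfolding c_def by (rule Max_in) auto
  then obtain i0 where i0: "c = x $ i0 / p $ i0" by auto
  define y where "y = c *s p - x"
  have "(c *s p) v* M = c *s (p v* M)"
    by (simp add: vec_eq_iff vector_matrix_mult_def sum_distrib_left mult.assoc)
  then have y_fixed: "y v* M = y"
    using fixed stationary_dist_fixed[OF p] by (simp add: y_def vector_matrix_mult_diff_distrib)
  have y_nonneg: "y $ i \<ge> 0" for i
  proof -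
    have "x $ i / p $ i \<le> c" unfolding c_def by (rule Max_ge) auto
    then show ?thesis using stationary_dist_pos[OF irr nonneg p, of i] by (simp add: y_def field_simps)
  qed
  have "y $ i0 = 0" using stationary_dist_pos[OF irr nonneg p, of i0] by (simp add: y_def i0)
  then have "y $ i = 0" for i by (rule fixed_vector_zero_spreads[OF irr nonneg y_fixed y_nonneg])
  then have x: "x = c *s p" by (simp add: y_def vec_eq_iff)
  then have "mass x = c * mass p" by (simp add: mass_def sum_distrib_left)
  with \<open>mass x = 0\<close> p have "c = 0" by (simp add: mass_def stationary_dist_def)
  with x show ?thesis by simp
qed

lemma mass_vector_matrix_mult_stochastic:
  assumes "stochastic_matrix M"
  shows "mass (x v* M) = mass x"
proof -
  have "mass (x v* M) = (\<Sum>j\<in>UNIV. \<Sum>i\<in>UNIV. x $ i * M $ i $ j)"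
    by (simp add: mass_def vector_matrix_mult_def)
  also have "\<dots> = (\<Sum>i\<in>UNIV. x $ i * (\<Sum>j\<in>UNIV. M $ i $ j))"
    by (subst sum.swap) (simp add: sum_distrib_left)
  also have "\<dots> = mass x" using assms by (simp add: stochastic_matrix_def mass_def)
  finally show ?thesis .
qed

definition stationary_system :: "'r::comm_ring_1^'b::finite^'b \<Rightarrow> 'b \<Rightarrow> 'r^'b^'b" where
  "stationary_system M k = (\<chi> i. if i = k then 1 else (mat 1 - transpose M) $ i)"

lemma stationary_system_mult_nth:
  "(stationary_system M k *v x) $ i = (if i = k then mass x else x $ i - (x v* M) $ i)"
proof -
  have "(stationary_system M k *v x) $ i
      = (if i = k then mass x else ((mat 1 - transpose M) *v x) $ i)"
    by (simp add: stationary_system_def matrix_vector_mult_def mass_def)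
  then show ?thesis by (simp add: matrix_vector_mult_diff_rdistrib)
qed

lemma det_stationary_system_nonzero:
  assumes stoch: "stochastic_matrix M" and irr: "irreducible_matrix M" and p: "stationary_dist M p"
  shows "det (stationary_system M k) \<noteq> 0"
proof -
  have "x = 0" if "stationary_system M k *v x = 0" for x
  proof -
    have mass: "mass x = 0"
      using stationary_system_mult_nth[of M k x k] \<open>stationary_system M k *v x = 0\<close> by simp
    have other: "(x v* M) $ i = x $ i" if "i \<noteq> k" for i
      using stationary_system_mult_nth[of M k x i] \<open>stationary_system M k *v x = 0\<close> that by simp
    have "(x v* M) $ k - x $ k = (\<Sum>i\<in>UNIV. (x v* M) $ i - x $ i)"
      using other by (subst sum.remove[of _ k]) (auto intro: sum.neutral)
    also have "\<dots> = 0"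
      using mass_vector_matrix_mult_stochastic[OF stoch, of x] mass by (simp add: mass_def sum_subtractf)
    finally have "(x v* M) $ k = x $ k" by simp
    with other have "x v* M = x" by (metis vec_eq_iff)
    then show "x = 0"
      using fixed_vector_mass_zero[OF irr _ p _ mass] stoch by (simp add: stochastic_matrix_def)
  qed
  then have "invertible (stationary_system M k)"
    unfolding invertible_left_inverse matrix_left_invertible_ker by blast
  then show ?thesis by (simp add: invertible_det_nz)
qed

lemma stationary_system_nth:
  "stationary_system M k $ i $ j = (if i = k then 1 else mat 1 $ i $ j - M $ j $ i)"
  by (simp add: stationary_system_def transpose_def)

lemma stationary_dist_cramer:
  assumes "stochastic_matrix M" "irreducible_matrix M" "stationary_dist M p"
  shows "p $ j = det (\<chi> i j'. if j' = j then axis k 1 $ i else stationary_system M k $ i $ j')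
                 / det (stationary_system M k)"
proof -
  have "stationary_system M k *v p = axis k 1"
    using assms(3) stationary_dist_fixed[OF assms(3)]
    by (simp add: vec_eq_iff stationary_system_mult_nth axis_def stationary_dist_def mass_def)
  then have "p = (\<chi> j. det (\<chi> i j'. if j' = j then axis k 1 $ i else stationary_system M k $ i $ j')
                     / det (stationary_system M k))"
    by (simp add: cramer[OF det_stationary_system_nonzero[OF assms]])
  then show ?thesis by simp
qed

lemma det_expansion:
  assumes "\<And>i j. (\<lambda>e. A e $ i $ j) has_fps_expansion_right AF $ i $ j"
  shows "(\<lambda>e. det (A e)) has_fps_expansion_right det AF"
proof -
  have "(\<lambda>_. of_int n) has_fps_expansion_right of_int n" for n
    using has_fps_expansion_right_const[of "of_int n"] by (simp add: fps_of_int)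
  then show ?thesis unfolding det_def
    by (intro has_fps_expansion_right_sum has_fps_expansion_right_mult has_fps_expansion_right_prod
        assms)
qed

lemma stationary_system_expansion:
  assumes "\<And>i j. (\<lambda>e. M e $ i $ j) has_fps_expansion_right E $ i $ j"
  shows "(\<lambda>e. stationary_system (M e) k $ i $ j) has_fps_expansion_right stationary_system E k $ i $ j"
proof (cases "i = k")
  case True
  then show ?thesis using has_fps_expansion_right_one by (simp add: stationary_system_nth)
next
  case False
  have "(\<lambda>e. mat 1 $ i $ j - M e $ j $ i) has_fps_expansion_right fps_const (mat 1 $ i $ j) - E $ j $ i"
    by (intro has_fps_expansion_right_diff has_fps_expansion_right_const assms)
  with False show ?thesis by (cases "i = j") (simp_all add: stationary_system_nth mat_def)
qed

text \<open>By Cramer's rule the stationary distribution is a quotient of determinants whose entries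
  expand; the quotient expands because its values lie in [0, 1].\<close>
lemma stationary_dist_nth_expansion:
  assumes M: "\<And>i j. (\<lambda>e. M e $ i $ j) has_fps_expansion_right E $ i $ j"
    and stochastic: "\<And>e. e > 0 \<Longrightarrow> stochastic_matrix (M e)"
    and irreducible: "\<And>e. e > 0 \<Longrightarrow> irreducible_matrix (M e)"
    and p: "\<And>e. e > 0 \<Longrightarrow> stationary_dist (M e) (p e)"
  obtains F where "(\<lambda>e. p e $ j) has_fps_expansion_right F"
proof -
  define N D where
    "N e = det (\<chi> i j'. if j' = j then axis j 1 $ i else stationary_system (M e) j $ i $ j')"
    and "D e = det (stationary_system (M e) j)" for e
  have p_eq: "p e $ j = N e / D e" and D_nz: "D e \<noteq> 0" if "e > 0" for e
    using stationary_dist_cramer det_stationary_system_nonzero stochastic irreducible p that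
    unfolding N_def D_def by blast+
  have "(\<lambda>e. N e) has_fps_expansion_right
          det (\<chi> i j'. if j' = j then axis j 1 $ i else stationary_system E j $ i $ j')"
    unfolding N_def
    using has_fps_expansion_right_zero has_fps_expansion_right_one stationary_system_expansion[OF M]
    by (intro det_expansion) (auto simp: axis_def)
  moreover have D: "(\<lambda>e. D e) has_fps_expansion_right det (stationary_system E j)"
    unfolding D_def by (intro det_expansion stationary_system_expansion M)
  moreover have "det (stationary_system E j) \<noteq> 0"
    using D D_nz by (rule has_fps_expansion_right_eventually_nonzero)
  moreover have "\<forall>\<^sub>F e in at_right 0. \<bar>N e\<bar> \<le> 1 * \<bar>D e\<bar>"
    using eventually_at_right_less[of 0]
  proof eventually_elim
    case (elim e)
    have "p e $ j \<le> mass (p e)"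
      using p[OF elim] unfolding mass_def stationary_dist_def by (intro member_le_sum) auto
    then have "\<bar>p e $ j\<bar> \<le> 1" using p[OF elim] by (simp add: stationary_dist_def mass_def)
    moreover have "N e = p e $ j * D e" using p_eq[OF elim] D_nz[OF elim] by simp
    ultimately show ?case using mult_left_le_one_le[of "\<bar>D e\<bar>" "\<bar>p e $ j\<bar>"] by (simp add: abs_mult)
  qed
  ultimately obtain B where "(\<lambda>e. N e / D e) has_fps_expansion_right B"
    by (rule has_fps_expansion_right_divide)
  moreover have "\<forall>\<^sub>F e in at_right 0. N e / D e = p e $ j"
    using eventually_at_right_less[of 0] by eventually_elim (simp add: p_eq)
  ultimately have "(\<lambda>e. p e $ j) has_fps_expansion_right B" by (rule has_fps_expansion_right_cong)
  then show ?thesis by (rule that)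
qed

lemma stationary_dist_expansion:
  assumes "\<And>i j. (\<lambda>e. M e $ i $ j) has_fps_expansion_right E $ i $ j"
    and "\<And>e. e > 0 \<Longrightarrow> stochastic_matrix (M e)" "\<And>e. e > 0 \<Longrightarrow> irreducible_matrix (M e)"
    and "\<And>e. e > 0 \<Longrightarrow> stationary_dist (M e) (p e)"
  obtains P where "\<And>j. (\<lambda>e. p e $ j) has_fps_expansion_right P $ j"
proof -
  have "\<exists>F. (\<lambda>e. p e $ j) has_fps_expansion_right F" for j
    by (rule stationary_dist_nth_expansion[of M E p j]) (use assms in blast)+
  then obtain F where "\<And>j. (\<lambda>e. p e $ j) has_fps_expansion_right F j" by metis
  then show ?thesis by (intro that[of "\<chi> j. F j"]) simp
qed

section \<open>Path probabilities and the normal parameterization\<close>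

lemma sum_map_eq_Cons:
  fixes Phi :: "'b::finite \<Rightarrow> 'a"
  shows "(\<Sum>ys | map Phi ys = a # as. g ys) = (\<Sum>j | Phi j = a. \<Sum>ys | map Phi ys = as. g (j # ys))"
proof -
  have "{ys. map Phi ys = a # as} = (\<lambda>(j, ys). j # ys) ` ({j. Phi j = a} \<times> {ys. map Phi ys = as})"
    by (auto simp: map_eq_Cons_conv image_iff)
  moreover have "inj_on (\<lambda>(j, ys). j # ys) ({j. Phi j = a} \<times> {ys. map Phi ys = as})"
    by (auto simp: inj_on_def)
  ultimately show ?thesis by (simp add: sum.reindex sum.cartesian_product case_prod_unfold)
qed

lemma sum_path_weight_forward:
  fixes Phi :: "'b::finite \<Rightarrow> 'a"
  shows "(\<Sum>ys | map Phi ys = zs. \<Sum>y\<in>UNIV. x $ y * path_weight M y ys) = mass (forward M Phi x zs)"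
proof (induction zs arbitrary: x)
  case Nil
  have "{ys. map Phi ys = []} = {[]}" by auto
  then show ?case by (simp add: mass_def)
next
  case (Cons a as)
  have "(\<Sum>ys | map Phi ys = a # as. \<Sum>y\<in>UNIV. x $ y * path_weight M y ys)
      = (\<Sum>j | Phi j = a. \<Sum>ys | map Phi ys = as. forward_step M Phi x a $ j * path_weight M j ys)"
    by (simp add: sum_map_eq_Cons forward_step_def sum_distrib_left mult_ac)
  also have "\<dots> = (\<Sum>j\<in>UNIV. \<Sum>ys | map Phi ys = as. forward_step M Phi x a $ j * path_weight M j ys)"
    by (intro sum.mono_neutral_left) (auto simp: forward_step_def)
  also have "\<dots> = mass (forward M Phi (forward_step M Phi x a) as)"
    by (subst sum.swap) (rule Cons.IH)
  finally show ?case by simp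
qed

lemma prob_YZ_eq_mass: "prob_YZ Phi p M y zs = mass (forward M Phi (axis y (p $ y)) zs)"
proof -
  have "(\<Sum>i\<in>UNIV. axis y (p $ y) $ i * path_weight M i ys) = p $ y * path_weight M y ys" for ys
  proof -
    have "(\<Sum>i\<in>UNIV. axis y (p $ y) $ i * path_weight M i ys)
        = (\<Sum>i\<in>UNIV. if i = y then p $ y * path_weight M y ys else 0)"
      by (intro sum.cong) (auto simp: axis_def)
    then show ?thesis by simp
  qed
  then show ?thesis by (simp add: prob_YZ_def prob_Y_def flip: sum_path_weight_forward)
qed

text \<open>Stationarity lets the first observed state be summed out as a preceding step.\<close>
lemma prob_Y_stationary:
  assumes "stationary_dist M p"
  shows "prob_Y p M ys = (\<Sum>y\<in>UNIV. p $ y * path_weight M y ys)"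
proof (cases ys)
  case (Cons j ys')
  have "(\<Sum>y\<in>UNIV. p $ y * path_weight M y ys) = (\<Sum>y\<in>UNIV. p $ y * M $ y $ j) * path_weight M j ys'"
    by (simp add: Cons sum_distrib_right mult.assoc)
  then show ?thesis using assms by (simp add: Cons prob_Y_def stationary_dist_def)
qed (use assms in \<open>simp add: prob_Y_def stationary_dist_def\<close>)

lemma prob_Z_eq_mass: "stationary_dist M p \<Longrightarrow> prob_Z Phi p M zs = mass (forward M Phi p zs)"
  by (simp add: prob_Z_def prob_Y_stationary sum_path_weight_forward)

lemma rank_le_1_minor_eq:
  fixes A :: "real^'n^'m"
  assumes "rank A \<le> 1"
  shows "A $ i $ j * A $ i' $ l = A $ i $ l * A $ i' $ j"
proof (rule ccontr)
  assume neq: "A $ i $ j * A $ i' $ l \<noteq> A $ i $ l * A $ i' $ j"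
  have "row i' A \<noteq> 0"
  proof
    assume "row i' A = 0"
    then have "A $ i' $ l = 0" "A $ i' $ j = 0" by (auto simp: row_def vec_eq_iff)
    with neq show False by simp
  qed
  moreover have "row i A \<notin> span {row i' A}"
  proof
    assume "row i A \<in> span {row i' A}"
    then obtain c where "row i A = c *\<^sub>R row i' A" by (auto simp: span_singleton)
    then have "A $ i $ j = c * A $ i' $ j" "A $ i $ l = c * A $ i' $ l"
      by (auto simp: row_def vec_eq_iff dest: spec[of _ j] spec[of _ l])
    with neq show False by (simp add: algebra_simps)
  qed
  ultimately have "independent {row i A, row i' A}"
    by (intro independent_insertI independent_empty) (auto simp: span_empty)
  moreover have "row i A \<noteq> row i' A"
    using \<open>row i A \<notin> span {row i' A}\<close> span_base[of "row i' A" "{row i' A}"] by auto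
  moreover have "{row i A, row i' A} \<subseteq> rows A" by (auto simp: rows_def)
  ultimately have "2 \<le> rank A"
    using independent_card_le_dim[of "{row i A, row i' A}" "rows A"] by (simp add: row_rank_def)
  with assms show False by simp
qed

lemma analytic_at0_expansion:
  assumes "analytic_at0 f"
  obtains F where "f has_fps_expansion_right F" and "fps_nth F 0 = f 0"
proof -
  obtain r c where "r > 0" and sums: "\<And>x. 0 \<le> x \<Longrightarrow> x < r \<Longrightarrow> (\<lambda>n. c n * x ^ n) sums f x"
    using assms unfolding analytic_at0_def by blast
  then have "f has_fps_expansion_right Abs_fps c" by (intro has_fps_expansion_right_Abs_fps) auto
  moreover have "c 0 = f 0"
    using sums_unique2[OF powser_sums_zero sums[of 0]] \<open>r > 0\<close> by simp
  ultimately show ?thesis using that by simp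
qed

lemma normally_parameterized_expansion:
  assumes "normally_parameterized Phi Delta"
  obtains E where "\<And>i j. (\<lambda>e. Delta e $ i $ j) has_fps_expansion_right E $ i $ j"
    and "rank_one_blocks_at_0 Phi E"
proof -
  have "\<exists>F. (\<lambda>e. Delta e $ i $ j) has_fps_expansion_right F \<and> fps_nth F 0 = Delta 0 $ i $ j" for i j
    using assms analytic_at0_expansion unfolding normally_parameterized_def by metis
  then obtain F where F: "\<And>i j. (\<lambda>e. Delta e $ i $ j) has_fps_expansion_right F i j"
    "\<And>i j. fps_nth (F i j) 0 = Delta 0 $ i $ j" by metis
  have "rank_one_blocks_at_0 Phi (\<chi> i j. F i j)"
    unfolding rank_one_blocks_at_0_def
  proof (intro allI impI)
    fix i i' j l assume "Phi j = Phi l"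
    define S where "S = Delta_sub Phi (Delta 0) (Phi j)"
    have "rank S \<le> 1" using assms unfolding normally_parameterized_def S_def
      by (metis le_refl rank_0 zero_le)
    then have "S $ i $ j * S $ i' $ l = S $ i $ l * S $ i' $ j" by (rule rank_le_1_minor_eq)
    then show "fps_nth ((\<chi> i j. F i j) $ i $ j * (\<chi> i j. F i j) $ i' $ l
                 - (\<chi> i j. F i j) $ i $ l * (\<chi> i j. F i j) $ i' $ j) 0 = 0"
      using \<open>Phi j = Phi l\<close> by (simp add: S_def Delta_sub_def F(2) fps_mult_nth_0)
  qed
  with F(1) show ?thesis by (intro that) simp_all
qed

lemma split_window:
  assumes "length zs = m + 1" "n \<le> m"
  defines "w \<equiv> butlast (drop (m - n) zs)" and "a \<equiv> last (drop (m - n) zs)"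
  shows "zs = take (m - n) zs @ w @ [a]" and "take m zs = take (m - n) zs @ w"
    and "length w = n"
proof -
  have "drop (m - n) zs \<noteq> []" using assms(1,2) by simp
  then show "zs = take (m - n) zs @ w @ [a]"
    unfolding w_def a_def by (metis append_butlast_last_id append_take_drop_id)
  have "take m zs = take (m - n) zs @ take n (drop (m - n) zs)"
    using assms(2) take_add[of "m - n" n zs] by simp
  then show "take m zs = take (m - n) zs @ w" using assms(1,2) by (simp add: w_def butlast_conv_take)
  show "length w = n" using assms(1,2) by (simp add: w_def)
qed

theorem corollary2p7:
  fixes Phi :: "'b::finite \<Rightarrow> 'a::finite"
    and Delta :: "real \<Rightarrow> real^'b^'b"
    and pi :: "real \<Rightarrow> real^'b"
    and zs zhs :: "'a list" and m mh n k :: nat and y yh :: 'b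
  assumes stoch: "\<forall>e\<ge>0. stochastic_matrix (Delta e)"
    and normal: "normally_parameterized Phi Delta"
    and stat: "\<forall>e>0. stationary_dist (Delta e) (pi e)"
    and lz: "length zs = m + 1" and lzh: "length zhs = mh + 1"
    and nm: "n \<le> m" and nmh: "n \<le> mh"
    and agree: "drop (m - n) zs = drop (mh - n) zhs"
    and o1: "ord0 (\<lambda>e. prob_Z Phi (pi e) (Delta e) (take m zs)
                     / prob_Z Phi (pi e) (Delta e) (take (m - n) zs)) \<le> enat k"
    and o2: "ord0 (\<lambda>e. prob_Z Phi (pi e) (Delta e) (take mh zhs)
                     / prob_Z Phi (pi e) (Delta e) (take (mh - n) zhs)) \<le> enat k"
    and o3: "ord0 (\<lambda>e. prob_YZ Phi (pi e) (Delta e) y (take m zs)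
                     / prob_YZ Phi (pi e) (Delta e) y (take (m - n) zs)) \<le> enat k"
    and o4: "ord0 (\<lambda>e. prob_YZ Phi (pi e) (Delta e) yh (take mh zhs)
                     / prob_YZ Phi (pi e) (Delta e) yh (take (mh - n) zhs)) \<le> enat k"
    and j: "j + 4 * k + 1 \<le> n"
  shows
   "taylor_coeffs (\<lambda>e. prob_YZ Phi (pi e) (Delta e) y zs
                       / prob_YZ Phi (pi e) (Delta e) y (take m zs)) j
      = taylor_coeffs (\<lambda>e. prob_YZ Phi (pi e) (Delta e) yh zhs
                       / prob_YZ Phi (pi e) (Delta e) yh (take mh zhs)) j
    \<and> taylor_coeffs (\<lambda>e. prob_YZ Phi (pi e) (Delta e) yh zhs
                       / prob_YZ Phi (pi e) (Delta e) yh (take mh zhs)) j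
      = taylor_coeffs (\<lambda>e. prob_Z Phi (pi e) (Delta e) zs
                       / prob_Z Phi (pi e) (Delta e) (take m zs)) j
    \<and> taylor_coeffs (\<lambda>e. prob_Z Phi (pi e) (Delta e) zs
                       / prob_Z Phi (pi e) (Delta e) (take m zs)) j
      = taylor_coeffs (\<lambda>e. prob_Z Phi (pi e) (Delta e) zhs
                       / prob_Z Phi (pi e) (Delta e) (take mh zhs)) j"
proof -
  obtain E where E: "\<And>i j. (\<lambda>e. Delta e $ i $ j) has_fps_expansion_right E $ i $ j"
    and rank_one: "rank_one_blocks_at_0 Phi E"
    using normally_parameterized_expansion[OF normal] by blast
  have "\<And>e. e > 0 \<Longrightarrow> irreducible_matrix (Delta e)"
    using normal by (simp add: normally_parameterized_def)
  with E stoch stat obtain P where P: "\<And>i. (\<lambda>e. pi e $ i) has_fps_expansion_right P $ i"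
    by (elim stationary_dist_expansion) auto
  have stochastic: "\<forall>e>0. stochastic_matrix (Delta e)" using stoch by simp
  have pi_nonneg: "\<forall>e>0. \<forall>i. pi e $ i \<ge> 0" using stat by (simp add: stationary_dist_def)
  have state: "\<And>i. (\<lambda>e. axis w (pi e $ w) $ i) has_fps_expansion_right axis w (P $ w) $ i"
    "\<forall>e>0. \<forall>i. axis w (pi e $ w) $ i \<ge> 0" for w
    using P pi_nonneg has_fps_expansion_right_zero by (auto simp: axis_def)
  have YZ: "\<forall>e>0. \<forall>ws. prob_YZ Phi (pi e) (Delta e) w ws
                        = mass (forward (Delta e) Phi (axis w (pi e $ w)) ws)" for w
    by (simp add: prob_YZ_eq_mass)
  have Z: "\<forall>e>0. \<forall>ws. prob_Z Phi (pi e) (Delta e) ws = mass (forward (Delta e) Phi (pi e) ws)"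
    using stat by (simp add: prob_Z_eq_mass)
  note window = split_window[OF lz nm] and window' = split_window[OF lzh nmh, folded agree]
  have len: "j + 2 * k < length (butlast (drop (m - n) zs))" using window(3) j by simp
  note conditional_eq = taylor_coeffs_conditional_eq[OF E rank_one stochastic]
  show ?thesis
    by (intro conjI
        conditional_eq[OF YZ[of y] state[of y] YZ[of yh] state[of yh] window(1,2) window'(1,2) o3 o4 len]
        conditional_eq[OF YZ[of yh] state[of yh] Z P pi_nonneg window'(1,2) window(1,2) o4 o1 len]
        conditional_eq[OF Z P pi_nonneg Z P pi_nonneg window(1,2) window'(1,2) o1 o2 len])
qed

end
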